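(* Let $m\ge4$ and let $\pi$ be the permutation of $\mathbb{F}_{2^m}$ given by $\pi(x)=x^{2^m-2}$. Then for all $(a_1,a_2),(b_1,b_2)\in\mathbb{F}_{2^m}\times\mathbb{F}_{2^m}$, the identities \[\pi(x)+\pi(x+a_2)+\pi(x+b_2)+\pi(x+a_2+b_2)=0,\qquad {\rm Tr}_1^m\bigl(a_1\pi(x+a_2)+b_1\pi(x+b_2)+(a_1+b_1)\pi(x+a_2+b_2)\bigr)=0\] hold for all $x\in\mathbb{F}_{2^m}$ if and only if one of the following holds: $(a_1,a_2)=(0,0)$, $(b_1,b_2)=(0,0)$, $(a_1,a_2)=(b_1,b_2)$, or $a_2=b_2=0$.
   Context: ${\rm Tr}_1^m$ denotes the absolute trace from $\mathbb{F}_{2^m}$ to $\mathbb{F}_2$. *)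

theory Defs
  imports Main
begin

text \<open>Absolute trace Tr_1^m from F_{2^m} to F_2 (value lies in the prime subfield {0,1}).\<close>
definition abs_trace :: "nat \<Rightarrow> 'a::field \<Rightarrow> 'a" where
  "abs_trace m x = (\<Sum>i<m. x ^ (2 ^ i))"

definition inv_perm :: "nat \<Rightarrow> 'a::field \<Rightarrow> 'a" where
  "inv_perm m x = x ^ (2 ^ m - 2)"

end

theory Submission
  imports Defs "HOL-Number_Theory.Residues" "HOL-Computational_Algebra.Polynomial"
begin

text \<open>
  Since \<open>x ^ (2 ^ m - 1) = 1\<close> for \<open>x \<noteq> 0\<close>, the permutation \<open>\<pi>\<close> is field inversion (with \<open>\<pi> 0 = 0\<close>).
  Evaluating the first identity at a point \<open>x \<notin> {0, a\<^sub>2, b\<^sub>2, a\<^sub>2 + b\<^sub>2}\<close> gives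
  \<open>a\<^sub>2 b\<^sub>2 (a\<^sub>2 + b\<^sub>2) = 0\<close>, and in each of the cases \<open>a\<^sub>2 = 0\<close>, \<open>b\<^sub>2 = 0\<close>, \<open>a\<^sub>2 = b\<^sub>2\<close>
  the trace condition collapses to \<open>Tr (c (1/x + 1/(x + e))) = 0\<close> for all \<open>x\<close>, with \<open>c\<close> one of
  \<open>a\<^sub>1, b\<^sub>1, a\<^sub>1 + b\<^sub>1\<close>.

  For \<open>e \<noteq> 0\<close> this forces \<open>c = 0\<close>. Substituting \<open>x = e t\<close> gives
  \<open>1/(e t) + 1/(e t + e) = 1/(e (t\<^sup>2 + t))\<close>, and by Artin--Schreier \<open>t\<^sup>2 + t\<close> ranges over the
  kernel \<open>H\<close> of the trace, so \<open>Tr (d/u) = 0\<close> on \<open>H\<close> for \<open>d = c/e\<close>. As \<open>u \<mapsto> d/u\<close> is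
  injective it permutes \<open>H - {0}\<close>, hence \<open>Tr (d/u) = Tr u\<close> for all \<open>u\<close>. For \<open>d \<noteq> 0\<close> and
  \<open>m \<ge> 3\<close> that is impossible: \<open>Tr u + Tr (d/u)\<close> is a polynomial function of \<open>u\<close> of degree
  \<open>2\<^sup>m - 2\<close>, which cannot vanish at all \<open>2\<^sup>m\<close> points.
\<close>

section \<open>Finite fields of order a power of 2\<close>

lemma card_UNIV_ne_1: "card (UNIV :: 'a::{zero_neq_one,finite} set) \<noteq> 1"
  by (metis (full_types) card_1_singletonE singletonD UNIV_I zero_neq_one)

lemma power_card_minus_1_eq_1:
  fixes x :: "'a::{field,finite}"
  assumes "x \<noteq> 0"
  shows "x ^ (card (UNIV :: 'a set) - 1) = 1"
proof -
  let ?N = "UNIV - {0 :: 'a}"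
  have card_N: "card ?N = card (UNIV :: 'a set) - 1"
    by (simp add: card_Diff_singleton)
  have "x ^ card ?N * \<Prod>?N = (\<Prod>y\<in>?N. x * y)"
    by (simp add: prod.distrib)
  also have "\<dots> = \<Prod>?N"
    by (rule prod.reindex_bij_witness[of _ "\<lambda>y. y / x" "\<lambda>y. x * y"]) (use assms in auto)
  finally show ?thesis
    using card_N by simp
qed

lemma power_card_eq_self:
  fixes x :: "'a::{field,finite}"
  shows "x ^ card (UNIV :: 'a set) = x"
proof (cases "x = 0")
  case False
  have "card (UNIV :: 'a set) = Suc (card (UNIV :: 'a set) - 1)"
    using finite_UNIV_card_ge_0[where 'a = 'a] by simp
  then show ?thesis
    using power_card_minus_1_eq_1[OF False] by (metis power_Suc mult.right_neutral)
qed (simp add: finite_UNIV_card_ge_0)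

lemma inverse_power_eq_power_card_minus:
  fixes u :: "'a::{field,finite}"
  assumes "0 < k" and "k < card (UNIV :: 'a set) - 1"
  shows "inverse u ^ k = u ^ (card (UNIV :: 'a set) - 1 - k)"
proof (cases "u = 0")
  case False
  have "u ^ (card (UNIV :: 'a set) - 1 - k) * u ^ k = 1"
    using assms power_card_minus_1_eq_1[OF False] by (simp flip: power_add)
  then show ?thesis
    using False by (simp add: field_simps)
qed (use assms in \<open>simp add: power_0_left\<close>)

lemma CHAR_eq_2_if_card_eq_power_2:
  assumes "card (UNIV :: 'a::{field,finite} set) = 2 ^ m"
  shows "CHAR('a) = 2"
proof -
  have "prime CHAR('a)"
    by (simp add: finite_imp_CHAR_pos prime_CHAR_semidom)
  moreover have "CHAR('a) dvd 2 ^ m"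
    using CHAR_dvd_CARD[where 'a = 'a] assms by simp
  ultimately show ?thesis
    by (metis prime_dvd_power primes_dvd_imp_eq two_is_prime_nat)
qed

lemma inv_perm_eq_inverse:
  fixes x :: "'a::{field,finite}"
  assumes "card (UNIV :: 'a set) = 2 ^ m" and "m \<ge> 2"
  shows "inv_perm m x = inverse x"
proof -
  have "(4::nat) \<le> 2 ^ m"
    using power_increasing[OF assms(2), of "2::nat"] by simp
  then show ?thesis
    using inverse_power_eq_power_card_minus[of 1 x] assms(1)
    by (simp add: inv_perm_def numeral_2_eq_2)
qed

lemma two_eq_0_CHAR_2:
  assumes "CHAR('a::semiring_1) = 2"
  shows "(2::'a) = 0"
  using of_nat_CHAR[where 'a = 'a] assms by simp

lemma add_self_CHAR_2:
  assumes "CHAR('a::ring_1) = 2"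
  shows "(x::'a) + x = 0"
  using minus_CHAR_2[OF assms, of x x] by simp

lemma add_self_left_CHAR_2:
  assumes "CHAR('a::ring_1) = 2"
  shows "(x::'a) + (x + y) = y"
  by (simp flip: add.assoc add: add_self_CHAR_2[OF assms])

lemma add_eq_0_iff_CHAR_2:
  assumes "CHAR('a::ring_1) = 2"
  shows "(x::'a) + y = 0 \<longleftrightarrow> x = y"
  by (simp add: add_eq_0_iff2 uminus_CHAR_2[OF assms])

section \<open>Sums of inverses in characteristic 2\<close>

lemma inverse_add_inverse_add_CHAR_2:
  assumes "CHAR('a::field) = 2" and "(x::'a) \<noteq> 0" and "x + a \<noteq> 0"
  shows "inverse x + inverse (x + a) = a / (x * (x + a))"
proof -
  have "x + a + x = a"
    using add_self_CHAR_2[OF assms(1)] by (simp add: add_ac)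
  then show ?thesis
    using assms(2,3) by (simp add: field_simps)
qed

lemma mult_add_eq_0_if_inverse_translates_sum_eq_0:
  fixes x a b :: "'a::field"
  assumes char: "CHAR('a) = 2"
    and nonzero: "x \<noteq> 0" "x + a \<noteq> 0" "x + b \<noteq> 0" "x + b + a \<noteq> 0"
    and sum: "inverse x + inverse (x + a) + inverse (x + b) + inverse (x + b + a) = 0"
  shows "a * b * (a + b) = 0"
proof -
  have "(inverse x + inverse (x + a)) + (inverse (x + b) + inverse (x + b + a)) = 0"
    using sum by (simp only: add.assoc)
  then have "a / (x * (x + a)) + a / ((x + b) * (x + b + a)) = 0"
    by (simp only: inverse_add_inverse_add_CHAR_2[OF char nonzero(1,2)]
        inverse_add_inverse_add_CHAR_2[OF char nonzero(3,4)])
  then have "a = 0 \<or> x * (x + a) = (x + b) * (x + b + a)"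
    using nonzero by (simp add: add_eq_0_iff_CHAR_2[OF char] frac_eq_eq mult_ac)
  moreover have "(x + b) * (x + b + a) = x * (x + a) + b * (a + b) + 2 * (x * b)"
    by (simp add: algebra_simps)
  ultimately show ?thesis
    by (auto simp: two_eq_0_CHAR_2[OF char])
qed

lemma inverse_translates_sum_vanishes_iff:
  fixes a b :: "'a::{field,finite}"
  assumes char: "CHAR('a) = 2" and "4 < card (UNIV :: 'a set)"
  shows "(\<forall>x. inverse x + inverse (x + a) + inverse (x + b) + inverse (x + a + b) = 0)
    \<longleftrightarrow> a = 0 \<or> b = 0 \<or> a = b"
proof
  assume vanish: "\<forall>x. inverse x + inverse (x + a) + inverse (x + b) + inverse (x + a + b) = 0"
  have "card {0, a, b, b + a} \<le> 4"
    by (simp add: card_insert_if)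
  then have "{0, a, b, b + a} \<noteq> UNIV"
    using assms(2) by auto
  then obtain x where "x \<notin> {0, a, b, b + a}"
    by blast
  then have "x \<noteq> 0" "x + a \<noteq> 0" "x + b \<noteq> 0" "x + b + a \<noteq> 0"
    by (auto simp: add_eq_0_iff_CHAR_2[OF char] add.assoc)
  moreover have "inverse x + inverse (x + a) + inverse (x + b) + inverse (x + b + a) = 0"
    using vanish[rule_format, of x] by (simp only: add.assoc add.commute[of b a])
  ultimately have "a * b * (a + b) = 0"
    by (rule mult_add_eq_0_if_inverse_translates_sum_eq_0[OF char])
  then show "a = 0 \<or> b = 0 \<or> a = b"
    by (simp add: add_eq_0_iff_CHAR_2[OF char])
next
  assume "a = 0 \<or> b = 0 \<or> a = b"
  then show "\<forall>x. inverse x + inverse (x + a) + inverse (x + b) + inverse (x + a + b) = 0"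
    by (auto simp: add_self_CHAR_2[OF char] add_self_left_CHAR_2[OF char] two_eq_0_CHAR_2[OF char]
        add.assoc)
qed

lemma inverse_add_inverse_artin_schreier:
  assumes "CHAR('a::field) = 2" and "(b::'a) \<noteq> 0" and "t \<noteq> 0" and "t \<noteq> 1"
  shows "inverse (b * t) + inverse (b * t + b) = inverse (b * (t ^ 2 + t))"
proof -
  have "b * t + b = b * (t + 1)"
    by (simp add: algebra_simps)
  moreover have "t + 1 \<noteq> 0"
    using assms by (simp add: add_eq_0_iff_CHAR_2)
  ultimately have "b * t + b \<noteq> 0"
    using assms(2) by simp
  then have "inverse (b * t) + inverse (b * t + b) = b / (b * t * (b * t + b))"
    using assms by (intro inverse_add_inverse_add_CHAR_2) simp_all
  also have "b * t * (b * t + b) = b * (b * (t ^ 2 + t))"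
    by (simp add: algebra_simps power2_eq_square)
  also have "b / (b * (b * (t ^ 2 + t))) = inverse (b * (t ^ 2 + t))"
    using assms(2) by (simp add: divide_inverse)
  finally show ?thesis .
qed

section \<open>The absolute trace\<close>

lemma abs_trace_0 [simp]: "abs_trace m (0::'a::field) = 0"
  by (simp add: abs_trace_def power_0_left)

lemma abs_trace_add:
  assumes "CHAR('a::field) = 2"
  shows "abs_trace m ((x::'a) + y) = abs_trace m x + abs_trace m y"
  using assms by (simp add: abs_trace_def freshmans_dream' sum.distrib)

lemma power2_abs_trace:
  assumes "CHAR('a::field) = 2"
  shows "abs_trace m (x::'a) ^ 2 = abs_trace m (x ^ 2)"
proof -
  have "(\<Sum>i<m. x ^ 2 ^ i) ^ 2 = (\<Sum>i<m. (x ^ 2 ^ i) ^ 2)"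
    by (rule freshmans_dream_sum'[where n = 1]) (use assms in auto)
  then show ?thesis
    by (simp add: abs_trace_def mult.commute flip: power_mult)
qed

lemma abs_trace_power2:
  assumes "(x::'a::field) ^ 2 ^ m = x"
  shows "abs_trace m (x ^ 2) = abs_trace m x"
proof -
  have "abs_trace m (x ^ 2) = (\<Sum>i<m. x ^ 2 ^ Suc i)"
    unfolding abs_trace_def by (simp add: power_mult[symmetric] mult.commute)
  also have "\<dots> = (\<Sum>i<Suc m. x ^ 2 ^ i) - x"
    by (simp only: sum.lessThan_Suc_shift) simp
  also have "\<dots> = abs_trace m x"
    using assms by (simp add: abs_trace_def)
  finally show ?thesis .
qed

lemma abs_trace_eq_0_or_1:
  assumes "CHAR('a::field) = 2" and "(x::'a) ^ 2 ^ m = x"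
  shows "abs_trace m x = 0 \<or> abs_trace m x = 1"
proof -
  have "abs_trace m x * (abs_trace m x - 1) = 0"
    using power2_abs_trace[OF assms(1)] abs_trace_power2[OF assms(2)]
    by (simp add: algebra_simps power2_eq_square)
  then show ?thesis
    by simp
qed

lemma abs_trace_artin_schreier:
  assumes "CHAR('a::field) = 2" and "(t::'a) ^ 2 ^ m = t"
  shows "abs_trace m (t ^ 2 + t) = 0"
  using assms by (simp add: abs_trace_add abs_trace_power2 add_self_CHAR_2)

definition trace_poly :: "nat \<Rightarrow> 'a::field poly" where
  "trace_poly m = (\<Sum>i<m. monom 1 (2 ^ i))"

lemma poly_trace_poly [simp]: "poly (trace_poly m) x = abs_trace m x"
  by (simp add: trace_poly_def abs_trace_def poly_sum poly_monom)

lemma degree_trace_poly: "degree (trace_poly (Suc n) :: 'a::field poly) = 2 ^ n"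
proof -
  have "degree (trace_poly n :: 'a poly) < 2 ^ n"
    unfolding trace_poly_def
    by (rule degree_sum_less) (auto intro: le_less_trans[OF degree_monom_le])
  then show ?thesis
    by (simp add: trace_poly_def degree_add_eq_right degree_monom_eq)
qed

lemma card_abs_trace_eq_0_le:
  "card {x::'a::field. abs_trace (Suc n) x = 0} \<le> 2 ^ n"
proof -
  have "trace_poly (Suc n) \<noteq> (0 :: 'a poly)"
    using degree_trace_poly[of n] by (metis degree_0 zero_less_power pos2 less_irrefl)
  then show ?thesis
    using card_poly_roots_bound[of "trace_poly (Suc n) :: 'a poly"] by (simp add: degree_trace_poly)
qed

lemma artin_schreier_eq_iff:
  assumes "CHAR('a::field) = 2"
  shows "(t::'a) ^ 2 + t = s ^ 2 + s \<longleftrightarrow> t = s \<or> t = s + 1"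
proof -
  have "(t + s) * (t + (s + 1)) = t ^ 2 + t + (s ^ 2 + s) + 2 * (t * s)"
    by (simp add: algebra_simps power2_eq_square)
  then have factor: "t ^ 2 + t + (s ^ 2 + s) = (t + s) * (t + (s + 1))"
    by (simp add: two_eq_0_CHAR_2[OF assms])
  have "t ^ 2 + t = s ^ 2 + s \<longleftrightarrow> t ^ 2 + t + (s ^ 2 + s) = 0"
    by (rule add_eq_0_iff_CHAR_2[OF assms, symmetric])
  also have "\<dots> \<longleftrightarrow> t + s = 0 \<or> t + (s + 1) = 0"
    unfolding factor by simp
  finally show ?thesis
    by (simp only: add_eq_0_iff_CHAR_2[OF assms])
qed

lemma card_UNIV_le_2_card_artin_schreier:
  assumes "CHAR('a::{field,finite}) = 2"
  shows "card (UNIV :: 'a set) \<le> 2 * card (range (\<lambda>t::'a. t ^ 2 + t))"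
proof -
  let ?f = "\<lambda>t::'a. t ^ 2 + t"
  have fiber: "card (?f -` {s}) \<le> 2" if "s \<in> range ?f" for s
  proof -
    from that obtain t0 where "s = ?f t0"
      by blast
    then have "?f -` {s} = {t0, t0 + 1}"
      by (auto simp: artin_schreier_eq_iff[OF assms])
    then show ?thesis
      by (simp add: card_insert_if)
  qed
  have "(UNIV :: 'a set) = (\<Union>s\<in>range ?f. ?f -` {s})"
    by blast
  then have "card (UNIV :: 'a set) = card (\<Union>s\<in>range ?f. ?f -` {s})"
    by simp
  also have "\<dots> \<le> (\<Sum>s\<in>range ?f. card (?f -` {s}))"
    by (rule card_UN_le) simp
  also have "\<dots> \<le> 2 * card (range ?f)"
    using sum_bounded_above[of "range ?f" "\<lambda>s. card (?f -` {s})" 2] fiber by (simp add: mult.commute)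
  finally show ?thesis .
qed

lemma range_artin_schreier_eq_abs_trace_kernel:
  assumes "card (UNIV :: 'a::{field,finite} set) = 2 ^ m"
  shows "range (\<lambda>t::'a. t ^ 2 + t) = {x. abs_trace m x = 0}"
proof (rule card_seteq)
  have char: "CHAR('a) = 2"
    using assms(1) by (rule CHAR_eq_2_if_card_eq_power_2)
  show "range (\<lambda>t::'a. t ^ 2 + t) \<subseteq> {x. abs_trace m x = 0}"
    using abs_trace_artin_schreier[OF char] power_card_eq_self[where 'a = 'a] assms(1) by auto
  obtain n where m: "m = Suc n"
    using assms card_UNIV_ne_1[where 'a = 'a] by (cases m) auto
  have "card {x::'a. abs_trace m x = 0} \<le> 2 ^ n"
    unfolding m by (rule card_abs_trace_eq_0_le)
  also have "\<dots> \<le> card (range (\<lambda>t::'a. t ^ 2 + t))"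
    using card_UNIV_le_2_card_artin_schreier[OF char] assms m by simp
  finally show "card {x::'a. abs_trace m x = 0} \<le> card (range (\<lambda>t::'a. t ^ 2 + t))" .
qed simp

section \<open>Traces of multiples of inverses\<close>

lemma abs_trace_divide_eq_if_vanishes_on_kernel:
  fixes d :: "'a::{field,finite}"
  assumes card: "card (UNIV :: 'a set) = 2 ^ m" and "d \<noteq> 0"
    and vanish: "\<And>u. abs_trace m u = 0 \<Longrightarrow> abs_trace m (d / u) = 0"
  shows "abs_trace m (d / u) = abs_trace m u"
proof -
  define K where "K = {u::'a. u \<noteq> 0 \<and> abs_trace m u = 0}"
  have "(\<lambda>u. d / u) ` K = K"
  proof (rule endo_inj_surj)
    show "(\<lambda>u. d / u) ` K \<subseteq> K"
      using vanish \<open>d \<noteq> 0\<close> by (auto simp: K_def)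
    show "inj_on (\<lambda>u. d / u) K"
      using \<open>d \<noteq> 0\<close> by (auto intro!: inj_onI simp: K_def field_simps)
  qed simp
  have kernel_closed: "u \<in> K" if "d / u \<in> K" for u
  proof -
    obtain v where "v \<in> K" and "d / u = d / v"
      using \<open>d / u \<in> K\<close> \<open>(\<lambda>u. d / u) ` K = K\<close> by (metis imageE)
    then show ?thesis
      using \<open>d \<noteq> 0\<close> by (simp add: divide_inverse)
  qed
  show ?thesis
  proof (cases "abs_trace m u = 0")
    case False
    then have "d / u \<notin> K"
      using kernel_closed by (auto simp: K_def)
    moreover have "d / u \<noteq> 0"
      using False \<open>d \<noteq> 0\<close> by auto
    ultimately have "abs_trace m (d / u) \<noteq> 0"
      by (simp add: K_def)
    have char: "CHAR('a) = 2"
      using card by (rule CHAR_eq_2_if_card_eq_power_2)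
    have "x ^ 2 ^ m = x" for x :: 'a
      using power_card_eq_self[of x] card by simp
    then show ?thesis
      using abs_trace_eq_0_or_1[OF char] False \<open>abs_trace m (d / u) \<noteq> 0\<close> by metis
  qed (simp add: vanish)
qed

text \<open>
  Represents \<open>u \<mapsto> Tr (d/u)\<close>: \<open>(d/u) ^ k = d ^ k * u ^ (2 ^ m - 1 - k)\<close>, also at \<open>u = 0\<close> since
  \<open>0 < k < 2 ^ m - 1\<close> for \<open>k = 2 ^ i\<close>, \<open>i < m\<close>.
\<close>

definition inverse_trace_poly :: "nat \<Rightarrow> 'a::field \<Rightarrow> 'a poly" where
  "inverse_trace_poly m d = (\<Sum>i<m. monom (d ^ 2 ^ i) (2 ^ m - 1 - 2 ^ i))"

lemma poly_inverse_trace_poly: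
  fixes d :: "'a::{field,finite}"
  assumes "card (UNIV :: 'a set) = 2 ^ m" and "m \<ge> 2"
  shows "poly (inverse_trace_poly m d) u = abs_trace m (d / u)"
proof -
  have "(inverse u) ^ 2 ^ i = u ^ (2 ^ m - 1 - 2 ^ i)" if "i < m" for i
  proof (rule inverse_power_eq_power_card_minus[where 'a = 'a, unfolded assms(1)])
    have "(2::nat) ^ i \<le> 2 ^ (m - 1)"
      using that by (intro power_increasing) auto
    moreover have "(2::nat) \<le> 2 ^ (m - 1)"
      using power_increasing[of 1 "m - 1" "2::nat"] assms(2) by simp
    moreover have "(2::nat) ^ m = 2 * 2 ^ (m - 1)"
      using assms(2) by (simp flip: power_Suc)
    ultimately show "2 ^ i < (2::nat) ^ m - 1"
      by linarith
  qed simp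
  then show ?thesis
    by (simp add: inverse_trace_poly_def abs_trace_def poly_sum poly_monom divide_inverse
        power_mult_distrib)
qed

lemma degree_inverse_trace_poly:
  fixes d :: "'a::field"
  assumes "d \<noteq> 0" and "m \<ge> 2"
  shows "degree (inverse_trace_poly m d) = 2 ^ m - 2"
proof -
  obtain n where m: "m = Suc n"
    using assms(2) by (cases m) auto
  have "(4::nat) \<le> 2 ^ m"
    using power_increasing[OF assms(2), of "2::nat"] by simp
  have "degree (monom (d ^ 2 ^ Suc i) (2 ^ m - 1 - 2 ^ Suc i)) < 2 ^ m - 2" for i
  proof -
    have "(2::nat) \<le> 2 ^ Suc i"
      by simp
    with \<open>4 \<le> 2 ^ m\<close> show ?thesis
      by (intro le_less_trans[OF degree_monom_le]) linarith
  qed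
  then have "degree (\<Sum>i<n. monom (d ^ 2 ^ Suc i) (2 ^ m - 1 - 2 ^ Suc i)) < 2 ^ m - 2"
    using \<open>4 \<le> 2 ^ m\<close> by (intro degree_sum_less) auto
  then show ?thesis
    unfolding inverse_trace_poly_def m sum.lessThan_Suc_shift
    using assms(1) by (simp add: degree_add_eq_left degree_monom_eq)
qed

lemma ex_abs_trace_divide_ne_abs_trace:
  fixes d :: "'a::{field,finite}"
  assumes card: "card (UNIV :: 'a set) = 2 ^ m" and "m \<ge> 3" and "d \<noteq> 0"
  shows "\<exists>u. abs_trace m (d / u) \<noteq> abs_trace m u"
proof (rule ccontr)
  assume "\<not> ?thesis"
  then have eq: "abs_trace m (d / u) = abs_trace m u" for u
    by simp
  define P where "P = trace_poly m + inverse_trace_poly m d"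
  have char: "CHAR('a) = 2"
    using card by (rule CHAR_eq_2_if_card_eq_power_2)
  have "poly P u = 0" for u
    using assms eq[of u] by (simp add: P_def poly_inverse_trace_poly add_self_CHAR_2[OF char])
  obtain n where m: "m = Suc n"
    using assms(2) by (cases m) auto
  have "(2::nat) ^ 2 \<le> 2 ^ n"
    using assms(2) m by (intro power_increasing) auto
  then have "(2::nat) ^ n < 2 ^ m - 2"
    using m by simp
  then have "degree P = 2 ^ m - 2"
    using assms by (simp add: P_def degree_add_eq_right degree_inverse_trace_poly degree_trace_poly m)
  then have "P \<noteq> 0"
    using \<open>2 ^ n < 2 ^ m - 2\<close> by auto
  have "card (UNIV :: 'a set) \<le> 2 ^ m - 2"
    using card_poly_roots_bound[OF \<open>P \<noteq> 0\<close>] \<open>\<And>u. poly P u = 0\<close> \<open>degree P = 2 ^ m - 2\<close>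
    by simp
  then show False
    using card \<open>2 ^ n < 2 ^ m - 2\<close> by linarith
qed

lemma abs_trace_mult_inverse_difference_eq_0_iff:
  fixes b c :: "'a::{field,finite}"
  assumes card: "card (UNIV :: 'a set) = 2 ^ m" and "m \<ge> 3"
  shows "(\<forall>x. abs_trace m (c * (inverse x + inverse (x + b))) = 0) \<longleftrightarrow> c = 0 \<or> b = 0"
proof
  assume vanish: "\<forall>x. abs_trace m (c * (inverse x + inverse (x + b))) = 0"
  show "c = 0 \<or> b = 0"
  proof (rule ccontr)
    assume "\<not> (c = 0 \<or> b = 0)"
    then have "c \<noteq> 0" and "b \<noteq> 0"
      by auto
    have char: "CHAR('a) = 2"
      using card by (rule CHAR_eq_2_if_card_eq_power_2)
    define d where "d = c / b"
    have "abs_trace m (d / u) = 0" if "abs_trace m u = 0" for u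
    proof (cases "u = 0")
      case False
      have "u \<in> range (\<lambda>t. t ^ 2 + t)"
        using that range_artin_schreier_eq_abs_trace_kernel[OF card] by simp
      then obtain t where u: "u = t ^ 2 + t"
        by blast
      have "t \<noteq> 0"
        using False u by auto
      moreover have "t \<noteq> 1"
        using False u two_eq_0_CHAR_2[OF char] by auto
      ultimately have "c * (inverse (b * t) + inverse (b * t + b)) = c * inverse (b * u)"
        using inverse_add_inverse_artin_schreier[OF char \<open>b \<noteq> 0\<close>] by (simp add: u)
      also have "\<dots> = d / u"
        by (simp add: d_def divide_inverse mult_ac)
      finally show ?thesis
        using vanish[rule_format, of "b * t"] by metis
    qed simp
    moreover have "d \<noteq> 0"
      using \<open>c \<noteq> 0\<close> \<open>b \<noteq> 0\<close> by (simp add: d_def)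
    ultimately have "abs_trace m (d / u) = abs_trace m u" for u
      by (intro abs_trace_divide_eq_if_vanishes_on_kernel[OF card])
    then show False
      using ex_abs_trace_divide_ne_abs_trace[OF assms \<open>d \<noteq> 0\<close>] by blast
  qed
next
  assume "c = 0 \<or> b = 0"
  then show "\<forall>x. abs_trace m (c * (inverse x + inverse (x + b))) = 0"
    by (auto simp: add_self_CHAR_2[OF CHAR_eq_2_if_card_eq_power_2[OF card]])
qed

lemma abs_trace_inverse_translates_vanishes_iff:
  fixes a1 a2 b1 b2 :: "'a::{field,finite}"
  assumes card: "card (UNIV :: 'a set) = 2 ^ m" and "m \<ge> 3" and "a2 = 0 \<or> b2 = 0 \<or> a2 = b2"
  shows "(\<forall>x. abs_trace m (a1 * inverse (x + a2) + b1 * inverse (x + b2)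
                           + (a1 + b1) * inverse (x + a2 + b2)) = 0)
    \<longleftrightarrow> (a1, a2) = (0, 0) \<or> (b1, b2) = (0, 0) \<or> (a1, a2) = (b1, b2) \<or> (a2 = 0 \<and> b2 = 0)"
proof -
  have char: "CHAR('a) = 2"
    using card by (rule CHAR_eq_2_if_card_eq_power_2)
  note char_2_simps = add_self_CHAR_2[OF char] add_self_left_CHAR_2[OF char] two_eq_0_CHAR_2[OF char]
  note trace_iff = abs_trace_mult_inverse_difference_eq_0_iff[OF assms(1,2)]
  consider "a2 = 0" | "b2 = 0" | "a2 = b2"
    using assms(3) by blast
  then show ?thesis
  proof cases
    case 1
    then have "a1 * inverse (x + a2) + b1 * inverse (x + b2) + (a1 + b1) * inverse (x + a2 + b2)
        = a1 * (inverse x + inverse (x + b2))" for x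
      by (simp add: algebra_simps char_2_simps)
    with 1 trace_iff[of a1 b2] show ?thesis
      by auto
  next
    case 2
    then have "a1 * inverse (x + a2) + b1 * inverse (x + b2) + (a1 + b1) * inverse (x + a2 + b2)
        = b1 * (inverse x + inverse (x + a2))" for x
      by (simp add: algebra_simps char_2_simps)
    with 2 trace_iff[of b1 a2] show ?thesis
      by auto
  next
    case 3
    then have "a1 * inverse (x + a2) + b1 * inverse (x + b2) + (a1 + b1) * inverse (x + a2 + b2)
        = (a1 + b1) * (inverse x + inverse (x + a2))" for x
      by (simp add: algebra_simps char_2_simps)
    with 3 trace_iff[of "a1 + b1" a2] show ?thesis
      by (auto simp: add_eq_0_iff_CHAR_2[OF char])
  qed
qed

theorem lemma3p9:
  fixes m :: nat and a1 a2 b1 b2 :: "'a::{field,finite}"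
  assumes "card (UNIV :: 'a set) = 2 ^ m" and "m \<ge> 4"
  shows "(\<forall>x::'a.
            inv_perm m x + inv_perm m (x + a2) + inv_perm m (x + b2) + inv_perm m (x + a2 + b2) = 0 \<and>
            abs_trace m (a1 * inv_perm m (x + a2) + b1 * inv_perm m (x + b2)
                         + (a1 + b1) * inv_perm m (x + a2 + b2)) = 0)
         \<longleftrightarrow> ((a1, a2) = (0, 0) \<or> (b1, b2) = (0, 0) \<or> (a1, a2) = (b1, b2) \<or> (a2 = 0 \<and> b2 = 0))"
proof -
  have char: "CHAR('a) = 2"
    using assms(1) by (rule CHAR_eq_2_if_card_eq_power_2)
  have inv: "inv_perm m = (inverse :: 'a \<Rightarrow> 'a)"
    using assms by (intro ext inv_perm_eq_inverse) auto
  have "(2::nat) ^ 4 \<le> 2 ^ m"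
    using assms(2) by (rule power_increasing) simp
  then have "(\<forall>x::'a. inverse x + inverse (x + a2) + inverse (x + b2) + inverse (x + a2 + b2) = 0)
      \<longleftrightarrow> a2 = 0 \<or> b2 = 0 \<or> a2 = b2"
    using assms(1) by (intro inverse_translates_sum_vanishes_iff[OF char]) simp
  moreover have "a2 = 0 \<or> b2 = 0 \<or> a2 = b2 \<Longrightarrow> (\<forall>x. abs_trace m (a1 * inverse (x + a2)
      + b1 * inverse (x + b2) + (a1 + b1) * inverse (x + a2 + b2)) = 0)
    \<longleftrightarrow> (a1, a2) = (0, 0) \<or> (b1, b2) = (0, 0) \<or> (a1, a2) = (b1, b2) \<or> (a2 = 0 \<and> b2 = 0)"
    using assms by (intro abs_trace_inverse_translates_vanishes_iff) auto
  ultimately show ?thesis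
    unfolding inv all_conj_distrib by auto
qed

end
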